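(* Let $K\le M$, $S\ge 1$, $\sigma^2>0$, and $\mathrm{EVM}\in(0,1]$. For $\nu=0,\ldots,S-1$ let $\bar{\mathbf{H}}[\nu]\in\mathbb{C}^{M\times K}$ have rank $K$. For $\rho>0$ define $$R_{\Sigma}(\rho)=\frac{1}{S}\sum_{\nu=0}^{S-1}\log_2\det\left(\mathbf{I}_M+\frac{\rho}{\sigma^2}\bar{\mathbf{H}}[\nu]\bar{\mathbf{H}}^{\mathrm{H}}[\nu]\right)-\frac{1}{S}\sum_{\nu=0}^{S-1}\log_2\det\left(\mathbf{I}_M+\frac{\rho\,\mathrm{EVM}^2}{\sigma^2}\bar{\mathbf{H}}[\nu]\bar{\mathbf{H}}^{\mathrm{H}}[\nu]\right).$$ Then $$\lim_{\rho\to\infty}R_{\Sigma}(\rho)=K\log_2\left(\frac{1}{\mathrm{EVM}^2}\right).$$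
   Context: $(\cdot)^{\mathrm{H}}$ denotes conjugate transpose and $\mathbf{I}_M$ the $M\times M$ identity matrix. In the paper, $R_\Sigma$ is the achievable uplink average sum rate of a multi-user MIMO OFDM system with $K$ users, $M$ base-station antennas, $S$ subcarriers, channel matrices $\bar{\mathbf{H}}[\nu]$, transmit power $\rho$, noise variance $\sigma^2$ and user hardware error vector magnitude $\mathrm{EVM}$. *)

theory Defs
  imports "HOL-Analysis.Analysis"
begin

definition cnj_transpose :: "complex^'k^'m \<Rightarrow> complex^'m^'k" where
  "cnj_transpose A = (\<chi> i j. cnj (A $ j $ i))"

text \<open>log2 det(I_M + c H H^H); the determinant is real (Hermitian PSD argument),
  so we take its real part.\<close>
definition log2det :: "real \<Rightarrow> complex^'k^'m \<Rightarrow> real" where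
  "log2det c H = log 2 (Re (det (mat 1 + c *\<^sub>R (H ** cnj_transpose H))))"

definition sum_rate ::
  "(nat \<Rightarrow> complex^'k^'m) \<Rightarrow> nat \<Rightarrow> real \<Rightarrow> real \<Rightarrow> real \<Rightarrow> real" where
  "sum_rate H S \<sigma>2 EVM \<rho> =
     (1 / real S) * (\<Sum>\<nu><S. log2det (\<rho> / \<sigma>2) (H \<nu>))
   - (1 / real S) * (\<Sum>\<nu><S. log2det (\<rho> * EVM\<^sup>2 / \<sigma>2) (H \<nu>))"

end

theory Submission
  imports Defs
begin

text \<open>Extend the full-column-rank matrix H to an invertible M \<times> M matrix W whose columns
  e 1, ..., e K are the columns of H. Then H H^H = W P W^H with P the coordinate
  projection onto E = range e, and det (I + A B) = det (I + B A) turns det (I + c H H^H) into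
  det (I + c P R) with R = W^H W positive definite. Only the K rows indexed by E depend on c;
  dividing them by c shows that det (I + c H H^H) / c^K converges to the determinant of the
  matrix with the rows of R on E and those of I elsewhere. That limit is nonzero because R is
  positive definite, hence positive as a limit of positive reals. So log2 det (I + a \<rho> H H^H)
  is K log2 (a \<rho>) plus a convergent term, and each subcarrier contributes
  K log2 (1 / EVM^2) to the limit of the rate.\<close>

lemma cnj_transpose_cnj_transpose [simp]: "cnj_transpose (cnj_transpose A) = A"
  by (simp add: cnj_transpose_def vec_eq_iff)

lemma det_cnj_transpose:
  fixes A :: "complex^'n^'n"
  shows "det (cnj_transpose A) = cnj (det A)"
proof -
  have "cnj_transpose A = transpose (\<chi> i j. cnj (A $ i $ j))"
    by (simp add: cnj_transpose_def transpose_def)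
  then have "det (cnj_transpose A) = det (\<chi> i j. cnj (A $ i $ j))"
    by simp
  also have "\<dots> = cnj (det A)"
    by (simp add: det_def)
  finally show ?thesis .
qed

lemma det_real_if_cnj_transpose_eq:
  fixes A :: "complex^'n^'n"
  assumes "cnj_transpose A = A"
  shows "det A \<in> \<real>"
  using det_cnj_transpose[of A] assms by (simp add: Reals_cnj_iff)

definition cinner :: "complex^'n \<Rightarrow> complex^'n \<Rightarrow> complex" where
  "cinner x y = (\<Sum>i\<in>UNIV. cnj (x $ i) * y $ i)"

lemma cinner_self: "cinner x x = of_real ((norm x)\<^sup>2)"
proof -
  have "cnj (x $ i) * x $ i = of_real ((norm (x $ i))\<^sup>2)" for i
    by (metis complex_norm_square mult.commute)
  then show ?thesis
    by (simp add: cinner_def norm_vec_def L2_set_def sum_nonneg del: of_real_power)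
qed

lemma cinner_add_right: "cinner x (y + z) = cinner x y + cinner x z"
  by (simp add: cinner_def algebra_simps sum.distrib)

lemma cinner_scaleR_right: "cinner x (c *\<^sub>R y) = of_real c * cinner x y"
  unfolding cinner_def vector_scaleR_component
  by (simp add: scaleR_conv_of_real sum_distrib_left mult_ac)

lemma cinner_cnj_transpose: "cinner x (cnj_transpose B *v y) = cinner (B *v x) y"
proof -
  have "cinner x (cnj_transpose B *v y) = (\<Sum>i\<in>UNIV. \<Sum>l\<in>UNIV. cnj (B $ l $ i * x $ i) * y $ l)"
    by (simp add: cinner_def cnj_transpose_def matrix_vector_mult_def sum_distrib_left mult_ac)
  also have "\<dots> = (\<Sum>l\<in>UNIV. \<Sum>i\<in>UNIV. cnj (B $ l $ i * x $ i) * y $ l)"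
    by (rule sum.swap)
  also have "\<dots> = cinner (B *v x) y"
    by (simp add: cinner_def matrix_vector_mult_def sum_distrib_right)
  finally show ?thesis .
qed

lemma scaleR_matrix_vector_mult:
  fixes A :: "'a::real_algebra_1^'n^'m"
  shows "(c *\<^sub>R A) *v x = c *\<^sub>R (A *v x)"
  by (simp add: matrix_vector_mult_def vec_eq_iff scaleR_sum_right)

lemma matrix_add_rdistrib: "(A + B) ** C = A ** C + B ** C"
  by (simp add: matrix_matrix_mult_def vec_eq_iff distrib_right sum.distrib)

lemma matrix_vector_mult_axis:
  fixes A :: "'a::comm_semiring_1^'n^'m"
  shows "A *v axis j 1 = column j A"
  by (simp add: matrix_vector_mult_def column_def axis_def vec_eq_iff if_distrib cong: if_cong)

lemma matrix_vector_mult_rows_if: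
  "((\<chi> i. if i \<in> E then A $ i else B $ i) *v x) $ i
    = (if i \<in> E then (A *v x) $ i else (B *v x) $ i)"
  by (simp add: matrix_vector_mult_def)

lemma det_ne_0_if_injective:
  fixes A :: "'a::field^'n^'n"
  assumes "\<And>x. A *v x = 0 \<Longrightarrow> x = 0"
  shows "det A \<noteq> 0"
  using assms
  by (simp add: invertible_det_nz [symmetric] invertible_left_inverse matrix_left_invertible_ker)

lemma tendsto_det:
  fixes A :: "'b \<Rightarrow> 'a::real_normed_field^'n^'n"
  assumes "\<And>i j. ((\<lambda>x. A x $ i $ j) \<longlongrightarrow> B $ i $ j) F"
  shows "((\<lambda>x. det (A x)) \<longlongrightarrow> det B) F"
  unfolding det_def by (intro tendsto_intros assms)

lemma isCont_det_identity_add_scaleR: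
  fixes M :: "'a::real_normed_field^'n^'n"
  shows "isCont (\<lambda>t. det (mat 1 + t *\<^sub>R M)) t"
  unfolding isCont_def by (rule tendsto_det) (auto intro!: tendsto_intros)

lemma det_identity_add_mult_commute:
  fixes A B :: "'a::field^'n^'n"
  assumes "invertible A"
  shows "det (mat 1 + A ** B) = det (mat 1 + B ** A)"
proof -
  have "(mat 1 + A ** B) ** A = A ** (mat 1 + B ** A)"
    by (simp add: matrix_add_rdistrib matrix_add_ldistrib matrix_mul_assoc)
  then have "det A * det (mat 1 + A ** B) = det A * det (mat 1 + B ** A)"
    by (metis det_mul mult.commute)
  moreover have "det A \<noteq> 0"
    using assms by (simp add: invertible_det_nz)
  ultimately show ?thesis
    by simp
qed

lemma full_rank_injective_gen:
  fixes A :: "'a::field^'n^'m"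
  shows "rank A = CARD('n) \<longleftrightarrow> inj ((*v) A)"
  by (simp add: matrix_left_invertible_injective [symmetric] matrix_left_invertible_span_rows_gen
      row_rank_def_gen vec.dim_eq_full [symmetric] card_cart_basis vec.dimension_def)

lemma independent_range_iff:
  fixes f :: "'i::finite \<Rightarrow> 'a::field^'n"
  assumes "inj f"
  shows "vec.independent (range f) \<longleftrightarrow> (\<forall>c. (\<Sum>i\<in>UNIV. c i *s f i) = 0 \<longrightarrow> (\<forall>i. c i = 0))"
proof -
  have reindex: "(\<Sum>v\<in>range f. u v *s v) = (\<Sum>i\<in>UNIV. u (f i) *s f i)" for u
    by (simp add: sum.reindex[OF assms])
  show ?thesis
  proof
    assume indep: "vec.independent (range f)"
    show "\<forall>c. (\<Sum>i\<in>UNIV. c i *s f i) = 0 \<longrightarrow> (\<forall>i. c i = 0)"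
    proof (intro allI impI)
      fix c i
      assume "(\<Sum>i\<in>UNIV. c i *s f i) = 0"
      then have "(\<Sum>v\<in>range f. c (inv f v) *s v) = 0"
        using assms by (simp add: reindex)
      with indep have "\<forall>v\<in>range f. c (inv f v) = 0"
        unfolding vec.independent_explicit by (elim conjE allE[of _ "\<lambda>v. c (inv f v)"]) simp
      then have "c (inv f (f i)) = 0"
        by blast
      then show "c i = 0"
        using assms by simp
    qed
  next
    assume "\<forall>c. (\<Sum>i\<in>UNIV. c i *s f i) = 0 \<longrightarrow> (\<forall>i. c i = 0)"
    then show "vec.independent (range f)"
      by (auto simp: vec.independent_explicit reindex)
  qed
qed

lemma inj_column_if_inj:
  fixes H :: "'a::comm_ring_1^'k^'m"
  assumes "inj ((*v) H)"
  shows "inj (\<lambda>j. column j H)"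
proof (rule injI)
  fix a b
  assume "column a H = column b H"
  then have "H *v axis a 1 = H *v axis b 1"
    by (simp add: matrix_vector_mult_axis)
  with assms have "axis a 1 = (axis b 1 :: 'a^'k)"
    by (rule injD)
  then show "a = b"
    by (simp add: axis_eq_axis)
qed

lemma injective_matrix_extends_to_invertible:
  fixes H :: "'a::field^'k^'m"
  assumes "inj ((*v) H)"
  obtains W :: "'a^'m^'m" and e :: "'k \<Rightarrow> 'm"
  where "invertible W" and "inj e" and "\<And>i j. W $ i $ e j = H $ i $ j"
proof -
  let ?h = "\<lambda>j. column j H"
  have columns_indep: "\<forall>c. (\<Sum>j\<in>UNIV. c j *s ?h j) = 0 \<longrightarrow> (\<forall>j. c j = 0)"
    using assms by (simp add: matrix_left_invertible_independent_columns [symmetric]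
        matrix_left_invertible_injective)
  have "inj ?h"
    using assms by (rule inj_column_if_inj)
  then have "vec.independent (range ?h)"
    using columns_indep independent_range_iff by blast
  then obtain B where "range ?h \<subseteq> B" "vec.independent B" "vec.span B = UNIV"
    by (metis vec.extend_basis_superset vec.independent_extend_basis vec.span_extend_basis)
  then have "finite B" "card B = CARD('m)"
    using vec.basis_card_eq_dim[of B UNIV] vec.finiteI_independent vec_dim_card by auto
  then obtain \<beta> :: "'m \<Rightarrow> 'a^'m" where \<beta>: "bij_betw \<beta> UNIV B"
    using finite_same_card_bij[of "UNIV::'m set" B] by auto
  define W where "W = (\<chi> i b. \<beta> b $ i)"
  define e where "e j = inv_into UNIV \<beta> (?h j)" for j
  have "column b W = \<beta> b" for b
    by (simp add: W_def column_def)
  moreover have "inj \<beta>" "range \<beta> = B"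
    using \<beta> by (auto simp: bij_betw_def)
  ultimately have "invertible W"
    using \<open>vec.independent B\<close>
    by (simp add: invertible_left_inverse matrix_left_invertible_independent_columns
        flip: independent_range_iff)
  moreover have \<beta>_e: "\<beta> (e j) = ?h j" for j
    using \<open>range ?h \<subseteq> B\<close> \<open>range \<beta> = B\<close> unfolding e_def by (blast intro: f_inv_into_f)
  then have "inj e"
    using \<open>inj ?h\<close> by (intro injI) (metis injD)
  moreover have "W $ i $ e j = H $ i $ j" for i j
    using \<beta>_e by (simp add: W_def column_def)
  ultimately show thesis by (rule that)
qed

lemma identity_add_gram_injective:
  fixes H :: "complex^'k^'m"
  assumes "t \<ge> 0" and "(mat 1 + t *\<^sub>R (H ** cnj_transpose H)) *v x = 0"
  shows "x = 0"
proof -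
  let ?y = "cnj_transpose H *v x"
  have "0 = cinner x ((mat 1 + t *\<^sub>R (H ** cnj_transpose H)) *v x)"
    using assms(2) by (simp add: cinner_def)
  also have "\<dots> = cinner x x + of_real t * cinner x (cnj_transpose (cnj_transpose H) *v ?y)"
    by (simp add: matrix_vector_mult_add_rdistrib scaleR_matrix_vector_mult
        cinner_add_right cinner_scaleR_right matrix_vector_mul_assoc)
  also have "\<dots> = of_real ((norm x)\<^sup>2 + t * (norm ?y)\<^sup>2)"
    by (simp only: cinner_cnj_transpose cinner_self of_real_add of_real_mult)
  finally have "(norm x)\<^sup>2 + t * (norm ?y)\<^sup>2 = 0"
    by (metis of_real_eq_0_iff)
  moreover have "t * (norm ?y)\<^sup>2 \<ge> 0"
    using assms(1) by simp
  ultimately have "(norm x)\<^sup>2 = 0"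
    using zero_le_power2[of "norm x"] by linarith
  then show "x = 0"
    by simp
qed

lemma det_identity_add_gram_real:
  fixes H :: "complex^'k^'m"
  shows "det (mat 1 + c *\<^sub>R (H ** cnj_transpose H)) \<in> \<real>"
  by (rule det_real_if_cnj_transpose_eq)
    (simp add: cnj_transpose_def vec_eq_iff mat_def matrix_matrix_mult_def mult.commute)

lemma det_identity_add_gram_pos:
  fixes H :: "complex^'k^'m"
  assumes "c \<ge> 0"
  shows "Re (det (mat 1 + c *\<^sub>R (H ** cnj_transpose H))) > 0"
proof (rule ccontr)
  define g where "g t = Re (det (mat 1 + t *\<^sub>R (H ** cnj_transpose H)))" for t
  assume "\<not> g c > 0"
  then have "g c \<le> 0" by simp
  moreover have "0 \<le> g 0" by (simp add: g_def)
  moreover have "\<forall>t. 0 \<le> t \<and> t \<le> c \<longrightarrow> isCont g t"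
    unfolding g_def by (intro allI impI continuous_Re isCont_det_identity_add_scaleR)
  ultimately have "\<exists>t. 0 \<le> t \<and> t \<le> c \<and> g t = 0"
    using assms by (intro IVT2)
  then obtain t where "0 \<le> t" "g t = 0"
    by blast
  have "det (mat 1 + t *\<^sub>R (H ** cnj_transpose H)) \<noteq> 0"
    using \<open>0 \<le> t\<close> by (intro det_ne_0_if_injective, rule identity_add_gram_injective)
  moreover have "det (mat 1 + t *\<^sub>R (H ** cnj_transpose H)) = of_real (g t)"
    using det_identity_add_gram_real[of t H] unfolding g_def by (metis Re_complex_of_real Reals_cases)
  ultimately show False
    using \<open>g t = 0\<close> by simp
qed

definition coord_proj :: "'n set \<Rightarrow> 'a::zero_neq_one^'n^'n" where
  "coord_proj E = (\<chi> i j. if i = j \<and> i \<in> E then 1 else 0)"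

lemma coord_proj_mult: "coord_proj E ** R = (\<chi> i. if i \<in> E then R $ i else 0)"
  by (simp add: coord_proj_def matrix_matrix_mult_def vec_eq_iff if_distrib[of "\<lambda>x. x * _"]
      cong: if_cong)

lemma tendsto_det_identity_add_coord_proj_mult:
  fixes R :: "'a::real_normed_field^'n^'n"
  shows "((\<lambda>c. det (mat 1 + c *\<^sub>R (coord_proj E ** R)) / of_real c ^ card E)
           \<longlongrightarrow> det (\<chi> i. if i \<in> E then R $ i else mat 1 $ i)) at_top"
proof -
  \<comment> \<open>each row i \<in> E of I + c P R is c times the row i of N (1 / c)\<close>
  define N where "N t = (\<chi> i. if i \<in> E then t *\<^sub>R mat 1 $ i + R $ i else mat 1 $ i)" for t :: real
  have scaled_rows:
    "det (mat 1 + c *\<^sub>R (coord_proj E ** R)) / of_real c ^ card E = det (N (inverse c))"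
    if "c > 0" for c
  proof -
    have "mat 1 + c *\<^sub>R (coord_proj E ** R)
        = (\<chi> i. (if i \<in> E then of_real c else 1) *s N (inverse c) $ i)"
      using that unfolding N_def coord_proj_mult
      by (auto simp: vec_eq_iff vector_scaleR_component) (simp_all add: scaleR_conv_of_real field_simps)
    then have "det (mat 1 + c *\<^sub>R (coord_proj E ** R)) = of_real c ^ card E * det (N (inverse c))"
      by (simp add: det_rows_mul prod.If_cases)
    then show ?thesis
      using that by simp
  qed
  have eventually_eq: "\<forall>\<^sub>F c in at_top.
      det (mat 1 + c *\<^sub>R (coord_proj E ** R)) / of_real c ^ card E = det (N (inverse c))"
    using eventually_gt_at_top[of 0] by (rule eventually_mono) (rule scaled_rows)
  have "((\<lambda>c. det (N (inverse c))) \<longlongrightarrow> det (N 0)) at_top"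
  proof (rule tendsto_det)
    fix i j
    have "((\<lambda>c. inverse c *\<^sub>R mat 1 $ i $ j + R $ i $ j) \<longlongrightarrow> 0 *\<^sub>R mat 1 $ i $ j + R $ i $ j) at_top"
      by (intro tendsto_intros tendsto_inverse_0_at_top filterlim_ident)
    then show "((\<lambda>c. N (inverse c) $ i $ j) \<longlongrightarrow> N 0 $ i $ j) at_top"
      by (simp add: N_def)
  qed
  moreover have "N 0 = (\<chi> i. if i \<in> E then R $ i else mat 1 $ i)"
    by (simp add: N_def vec_eq_iff)
  ultimately show ?thesis
    using tendsto_cong[OF eventually_eq] by simp
qed

lemma det_rows_of_gram_ne_0:
  fixes W :: "complex^'n^'n"
  assumes "\<And>x. W *v x = 0 \<Longrightarrow> x = 0"
  shows "det (\<chi> i. if i \<in> E then (cnj_transpose W ** W) $ i else mat 1 $ i) \<noteq> 0"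
proof (rule det_ne_0_if_injective)
  fix x
  let ?y = "cnj_transpose W *v (W *v x)"
  assume x: "(\<chi> i. if i \<in> E then (cnj_transpose W ** W) $ i else mat 1 $ i) *v x = 0"
  have "cnj (x $ i) * ?y $ i = 0" for i
    using arg_cong[OF x, of "\<lambda>v. v $ i"] unfolding matrix_vector_mult_rows_if
    by (simp add: matrix_vector_mul_assoc split: if_splits)
  then have "cinner x ?y = 0"
    unfolding cinner_def by (intro sum.neutral) blast
  then have "norm (W *v x) = 0"
    by (simp add: cinner_cnj_transpose cinner_self)
  then show "x = 0"
    by (rule assms[OF iffD1[OF norm_eq_zero]])
qed

lemma gram_eq_extension_coord_proj:
  fixes H :: "complex^'k^'m"
  assumes "inj e" and "\<And>i j. W $ i $ e j = H $ i $ j"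
  shows "H ** cnj_transpose H = W ** (coord_proj (range e) ** cnj_transpose W)"
proof -
  have "(W ** (coord_proj (range e) ** cnj_transpose W)) $ a $ b
      = (\<Sum>c\<in>range e. W $ a $ c * cnj (W $ b $ c))" for a b
    unfolding coord_proj_mult
    by (simp add: matrix_matrix_mult_def cnj_transpose_def if_distrib[of "\<lambda>v. v $ _"]
        if_distrib[of "\<lambda>x. _ * x"] sum.If_cases cong: if_cong)
  also have "\<dots> a b = (\<Sum>j\<in>UNIV. H $ a $ j * cnj (H $ b $ j))" for a b
    by (simp add: sum.reindex[OF assms(1)] assms(2))
  finally show ?thesis
    by (simp add: matrix_matrix_mult_def cnj_transpose_def vec_eq_iff)
qed

lemma det_identity_add_gram_eq_coord_proj:
  fixes H :: "complex^'k^'m" and W :: "complex^'m^'m" and c :: real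
  assumes "invertible W" and "inj e" and "\<And>i j. W $ i $ e j = H $ i $ j"
  shows "det (mat 1 + c *\<^sub>R (H ** cnj_transpose H))
    = det (mat 1 + c *\<^sub>R (coord_proj (range e) ** (cnj_transpose W ** W)))"
proof -
  let ?P = "coord_proj (range e)"
  have "mat 1 + c *\<^sub>R (H ** cnj_transpose H) = mat 1 + W ** (c *\<^sub>R (?P ** cnj_transpose W))"
    by (simp add: gram_eq_extension_coord_proj[OF assms(2,3)] scalar_matrix_assoc matrix_scalar_ac
        matrix_mul_assoc)
  also have "det \<dots> = det (mat 1 + (c *\<^sub>R (?P ** cnj_transpose W)) ** W)"
    using assms(1) by (rule det_identity_add_mult_commute)
  finally show ?thesis
    by (simp add: scalar_matrix_assoc matrix_mul_assoc)
qed

lemma tendsto_det_identity_add_gram_div_power: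
  fixes H :: "complex^'k^'m"
  assumes "inj ((*v) H)"
  obtains L where "L > 0"
    and "((\<lambda>c. Re (det (mat 1 + c *\<^sub>R (H ** cnj_transpose H))) / c ^ CARD('k)) \<longlongrightarrow> L) at_top"
proof -
  obtain W :: "complex^'m^'m" and e :: "'k \<Rightarrow> 'm"
    where W: "invertible W" and e: "inj e" and WH: "\<And>i j. W $ i $ e j = H $ i $ j"
    using injective_matrix_extends_to_invertible[OF assms] by blast
  let ?E = "range e" and ?R = "cnj_transpose W ** W"
  let ?f = "\<lambda>c. det (mat 1 + c *\<^sub>R (H ** cnj_transpose H)) / of_real (c ^ CARD('k))"
  define L where "L = det (\<chi> i. if i \<in> ?E then ?R $ i else mat 1 $ i)"
  have lim: "(?f \<longlongrightarrow> L) at_top"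
    using tendsto_det_identity_add_coord_proj_mult[of ?E ?R]
    by (simp add: det_identity_add_gram_eq_coord_proj[OF W e WH] L_def card_image[OF e])
  have "L \<noteq> 0"
    unfolding L_def using W
    by (intro det_rows_of_gram_ne_0) (simp add: invertible_left_inverse matrix_left_invertible_ker)
  have "\<forall>\<^sub>F c in at_top. ?f c \<in> \<real>\<^sub>\<ge>\<^sub>0"
    using eventually_gt_at_top[of 0]
  proof eventually_elim
    case (elim c)
    then show ?case
      using det_identity_add_gram_real[of c H] det_identity_add_gram_pos[of c H]
      by (simp add: complex_nonneg_Reals_iff complex_is_Real_iff del: of_real_power)
  qed
  then have "L \<in> \<real>\<^sub>\<ge>\<^sub>0"
    using lim by (intro Lim_in_closed_set[OF closed_nonneg_Reals_complex]) simp_all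
  with \<open>L \<noteq> 0\<close> have "Re L > 0"
    by (auto simp: complex_nonneg_Reals_iff complex_eq_iff)
  moreover have "((\<lambda>c. Re (?f c)) \<longlongrightarrow> Re L) at_top"
    using lim by (rule tendsto_Re)
  ultimately show thesis
    using that by (simp del: of_real_power)
qed

lemma tendsto_log2det_diff:
  fixes H :: "complex^'k^'m"
  assumes "inj ((*v) H)" and "a > 0" and "b > 0"
  shows "((\<lambda>\<rho>. log2det (a * \<rho>) H - log2det (b * \<rho>) H) \<longlongrightarrow> real CARD('k) * log 2 (a / b)) at_top"
proof -
  define \<phi> where "\<phi> c = Re (det (mat 1 + c *\<^sub>R (H ** cnj_transpose H))) / c ^ CARD('k)" for c
  obtain L where "L > 0" and lim: "(\<phi> \<longlongrightarrow> L) at_top"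
    using tendsto_det_identity_add_gram_div_power[OF assms(1)] unfolding \<phi>_def by blast
  have log2det_eq: "log2det c H = log 2 (\<phi> c) + real CARD('k) * log 2 c" if "c > 0" for c
  proof -
    have "Re (det (mat 1 + c *\<^sub>R (H ** cnj_transpose H))) = \<phi> c * c ^ CARD('k)"
      using that by (simp add: \<phi>_def)
    moreover have "\<phi> c > 0"
      using that det_identity_add_gram_pos[of c H] by (simp add: \<phi>_def)
    ultimately show ?thesis
      using that by (simp add: log2det_def log_mult log_nat_power)
  qed
  have "\<forall>\<^sub>F \<rho> in at_top. log2det (a * \<rho>) H - log2det (b * \<rho>) H
      = log 2 (\<phi> (a * \<rho>)) - log 2 (\<phi> (b * \<rho>)) + real CARD('k) * log 2 (a / b)"
    using eventually_gt_at_top[of 0]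
  proof eventually_elim
    case (elim \<rho>)
    then show ?case
      using assms(2,3) by (simp add: log2det_eq log_mult log_divide algebra_simps)
  qed
  moreover have "((\<lambda>\<rho>. \<phi> (k * \<rho>)) \<longlongrightarrow> L) at_top" if "k > 0" for k
    using lim filterlim_tendsto_pos_mult_at_top[OF tendsto_const that filterlim_ident]
    by (rule filterlim_compose)
  then have "((\<lambda>\<rho>. log 2 (\<phi> (a * \<rho>)) - log 2 (\<phi> (b * \<rho>)) + real CARD('k) * log 2 (a / b))
      \<longlongrightarrow> log 2 L - log 2 L + real CARD('k) * log 2 (a / b)) at_top"
    using assms(2,3) \<open>L > 0\<close> by (intro tendsto_intros) auto
  ultimately show ?thesis
    by (simp add: tendsto_cong)
qed

theorem corollary1:
  fixes H :: "nat \<Rightarrow> complex^'k^'m" and S :: nat and \<sigma>2 EVM :: real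
  assumes "CARD('k) \<le> CARD('m)"
    and "S \<ge> 1"
    and "\<sigma>2 > 0"
    and "0 < EVM" and "EVM \<le> 1"
    and "\<forall>\<nu><S. rank (H \<nu>) = CARD('k)"
  shows "((\<lambda>\<rho>. sum_rate H S \<sigma>2 EVM \<rho>) \<longlongrightarrow> real CARD('k) * log 2 (1 / EVM\<^sup>2)) at_top"
proof -
  let ?a = "1 / \<sigma>2" and ?b = "EVM\<^sup>2 / \<sigma>2"
  have rate: "sum_rate H S \<sigma>2 EVM \<rho>
      = (1 / real S) * (\<Sum>\<nu><S. log2det (?a * \<rho>) (H \<nu>) - log2det (?b * \<rho>) (H \<nu>))" for \<rho>
    by (simp add: sum_rate_def sum_subtractf right_diff_distrib mult.commute)
  have "((\<lambda>\<rho>. (1 / real S) * (\<Sum>\<nu><S. log2det (?a * \<rho>) (H \<nu>) - log2det (?b * \<rho>) (H \<nu>)))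
      \<longlongrightarrow> (1 / real S) * (\<Sum>\<nu><S. real CARD('k) * log 2 (?a / ?b))) at_top"
    using assms(3,4,6)
    by (intro tendsto_mult tendsto_const tendsto_sum tendsto_log2det_diff)
      (simp_all add: full_rank_injective_gen)
  moreover have "(1 / real S) * (\<Sum>\<nu><S. real CARD('k) * log 2 (?a / ?b))
      = real CARD('k) * log 2 (1 / EVM\<^sup>2)"
    using assms(2,3) by simp
  ultimately show ?thesis
    by (simp only: rate)
qed

end
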